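(* Let $k\geq 4$ and let $\alpha>0$ be sufficiently small. There exist infinitely many integers $N\geq 1$ and sets $A\subseteq \{1,2,\dots,N\}$ with $|A|\geq \alpha N$ such that $A$ contains no more than \[\exp\bigl(-c\log^2(2/\alpha)\bigr)N^{k-1}\] solutions $(x_1,\dots,x_k)\in A^k$ to the equation $x_1+\cdots+x_{k-1}=(k-1)x_k$, where $c>0$ is a constant. *)

theory Defs
  imports Complex_Main "HOL-Library.FuncSet"
begin

text \<open>A tuple is represented as a function on the index set \<open>{0..<k}\<close> (extensional,
  undefined outside), where index \<open>i\<close> stands for \<open>x_{i+1}\<close>; the last variable
  \<open>x_k\<close> is at index \<open>k-1\<close>.\<close>
definition solutions :: "nat \<Rightarrow> int set \<Rightarrow> (nat \<Rightarrow> int) set" where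
  "solutions k A = {x \<in> {0..<k} \<rightarrow>\<^sub>E A.
      (\<Sum>i<k - 1. x i) = int (k - 1) * x (k - 1)}"

definition num_solutions :: "nat \<Rightarrow> int set \<Rightarrow> nat" where
  "num_solutions k A = card (solutions k A)"

end

theory Submission
  imports Defs "HOL-Library.Infinite_Set"
begin

(* Write k = K + 1.  Behrend's construction, fattened by intervals: among the points of
   {0..<d}^n choose, by pigeonhole, a sphere |v|^2 = R carrying at least d^n / (n d^2) of them,
   read each such v as a base-Kd number beta(v), and let A be the union of the blocks
   (KL beta(v), KL beta(v) + L].  The offsets in [1, L] change x_1 + ... + x_K - K x_(K+1) by
   less than KL, and digits below d produce no carries in base Kd, so a solution of
   x_1 + ... + x_K = K x_(K+1) in A forces the same equation between the underlying sphere
   points, digit by digit.  On a sphere, a point that is the mean of K others equals all of them;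
   hence every solution lies in a single block and there are at most d^n L^K solutions.
   For N = K L (Kd)^n this gives density |A| / N >= 1 / (K^(n+1) n d^2) and at most N^K / d^n
   solutions.  Taking n ~ log(2/alpha) / (8 log K) and d ~ (2/alpha)^(1/8) makes the density at
   least alpha and d^n >= exp(c log^2(2/alpha)); letting L grow gives infinitely many N. *)

lemma abs_mult_less_imp_zero:
  fixes M t :: int
  assumes "\<bar>M * t\<bar> < M"
  shows "t = 0"
proof (rule ccontr)
  assume "t \<noteq> 0"
  then have "\<bar>M\<bar> * 1 \<le> \<bar>M\<bar> * \<bar>t\<bar>" by (intro mult_left_mono) auto
  then have "\<bar>M\<bar> \<le> \<bar>M * t\<bar>" by (simp only: abs_mult mult_1_right)
  then show False using assms abs_ge_self[of M] by linarith
qed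

lemma digit_expansion_eq_0_imp_digits_eq_0:
  fixes u :: "nat \<Rightarrow> int"
  assumes "\<And>j. j < n \<Longrightarrow> \<bar>u j\<bar> < D" and "(\<Sum>j<n. u j * D ^ j) = 0" and "j < n"
  shows "u j = 0"
  using assms
proof (induction n arbitrary: u j)
  case 0
  then show ?case by simp
next
  case (Suc n)
  have expansion: "(\<Sum>j<Suc n. u j * D ^ j) = u 0 + D * (\<Sum>j<n. u (Suc j) * D ^ j)"
    by (simp only: sum.lessThan_Suc_shift) (simp add: sum_distrib_left mult_ac)
  have "\<bar>D * (\<Sum>j<n. u (Suc j) * D ^ j)\<bar> < D"
    using Suc.prems(1)[of 0] Suc.prems(2) expansion by simp
  then have higher: "(\<Sum>j<n. u (Suc j) * D ^ j) = 0"
    by (rule abs_mult_less_imp_zero)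
  then have "u 0 = 0" using Suc.prems(2) expansion by simp
  moreover have "u (Suc i) = 0" if "i < n" for i
    using Suc.IH[of "\<lambda>j. u (Suc j)", OF _ higher that] Suc.prems(1) by simp
  ultimately show ?case using Suc.prems(3) by (cases j) auto
qed

definition from_digits :: "nat \<Rightarrow> nat \<Rightarrow> (nat \<Rightarrow> nat) \<Rightarrow> int" where
  "from_digits D n v = (\<Sum>j<n. int (v j) * int D ^ j)"

lemma from_digits_bounds:
  assumes "\<And>j. j < n \<Longrightarrow> v j < D"
  shows "0 \<le> from_digits D n v" and "from_digits D n v < int D ^ n"
proof -
  have "0 \<le> from_digits D n v \<and> from_digits D n v < int D ^ n"
    using assms
  proof (induction n)
    case 0
    then show ?case by (simp add: from_digits_def)
  next
    case (Suc n)
    have "int (v n) * int D ^ n \<le> (int D - 1) * int D ^ n"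
      using Suc.prems[of n] by (intro mult_right_mono) auto
    then show ?case using Suc by (simp add: from_digits_def algebra_simps)
  qed
  then show "0 \<le> from_digits D n v" and "from_digits D n v < int D ^ n" by auto
qed

lemma inj_on_from_digits: "inj_on (from_digits D n) ({0..<n} \<rightarrow>\<^sub>E {0..<D})"
proof (rule inj_onI)
  fix v w assume v: "v \<in> {0..<n} \<rightarrow>\<^sub>E {0..<D}" and w: "w \<in> {0..<n} \<rightarrow>\<^sub>E {0..<D}"
    and eq: "from_digits D n v = from_digits D n w"
  have "(\<Sum>j<n. (int (v j) - int (w j)) * int D ^ j) = 0"
    using eq by (simp add: from_digits_def left_diff_distrib sum_subtractf)
  moreover have "\<bar>int (v j) - int (w j)\<bar> < int D" if "j < n" for j
  proof -
    have "v j < D" "w j < D" using v w that by (auto simp: PiE_iff)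
    then show ?thesis by linarith
  qed
  ultimately have "int (v j) - int (w j) = 0" if "j < n" for j
    using digit_expansion_eq_0_imp_digits_eq_0[of n "\<lambda>j. int (v j) - int (w j)" "int D"] that
    by blast
  then show "v = w" using v w by (intro PiE_ext) auto
qed

lemma from_digits_no_carry:
  assumes "0 < K" and "K * d \<le> D" and digits: "\<And>i j. i \<le> K \<Longrightarrow> j < n \<Longrightarrow> V i j < d"
    and "(\<Sum>i<K. from_digits D n (V i)) = int K * from_digits D n (V K)" and "j < n"
  shows "(\<Sum>i<K. int (V i j)) = int K * int (V K j)"
proof -
  define u where "u j = (\<Sum>i<K. int (V i j)) - int K * int (V K j)" for j
  have "(\<Sum>j<n. u j * int D ^ j)
      = (\<Sum>i<K. from_digits D n (V i)) - int K * from_digits D n (V K)"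
    by (simp add: u_def from_digits_def left_diff_distrib sum_subtractf sum_distrib_left
        sum_distrib_right sum.swap[of _ "{..<K}"] mult.assoc)
  also have "\<dots> = 0" using assms(4) by simp
  finally have expansion: "(\<Sum>j<n. u j * int D ^ j) = 0" .
  have "\<bar>u j\<bar> < int D" if "j < n" for j
  proof -
    have "(\<Sum>i<K. int (V i j)) \<le> of_nat (card {..<K}) * (int d - 1)"
      using digits that by (intro sum_bounded_above) force
    then have "(\<Sum>i<K. int (V i j)) \<le> int K * int d - int K" by (simp add: algebra_simps)
    moreover have "int K * int (V K j) \<le> int K * (int d - 1)"
      using digits[of K j] that by (intro mult_left_mono) auto
    then have "int K * int (V K j) \<le> int K * int d - int K" by (simp add: algebra_simps)
    moreover have "int K * int d \<le> int D" using assms(2) by (metis of_nat_le_iff of_nat_mult)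
    moreover have "0 \<le> (\<Sum>i<K. int (V i j))" "0 \<le> int K * int (V K j)" by (simp_all add: sum_nonneg)
    ultimately show ?thesis using \<open>0 < K\<close> unfolding u_def abs_less_iff by linarith
  qed
  then show ?thesis
    using digit_expansion_eq_0_imp_digits_eq_0[OF _ expansion \<open>j < n\<close>] by (simp add: u_def)
qed

lemma block_offsets_cancel:
  fixes q r :: "nat \<Rightarrow> int"
  assumes "0 < K" and "int K * int L \<le> M"
    and offsets: "\<And>i. i \<le> K \<Longrightarrow> 1 \<le> r i \<and> r i \<le> int L"
    and "(\<Sum>i<K. M * q i + r i) = int K * (M * q K + r K)"
  shows "(\<Sum>i<K. q i) = int K * q K"
proof -
  have "M * ((\<Sum>i<K. q i) - int K * q K) = int K * r K - (\<Sum>i<K. r i)"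
    using assms(4) by (simp add: sum.distrib sum_distrib_left algebra_simps)
  moreover have "\<bar>int K * r K - (\<Sum>i<K. r i)\<bar> < M"
  proof -
    have "int K \<le> (\<Sum>i<K. r i)"
      using sum_bounded_below[of "{..<K}" 1 r] offsets by simp
    moreover have "(\<Sum>i<K. r i) \<le> int K * int L"
      using sum_bounded_above[of "{..<K}" r "int L"] offsets by simp
    moreover have "int K * 1 \<le> int K * r K" "int K * r K \<le> int K * int L"
      using offsets[of K] by (intro mult_left_mono; simp)+
    ultimately show ?thesis using assms(1,2) unfolding abs_less_iff by linarith
  qed
  ultimately show ?thesis by (metis abs_mult_less_imp_zero eq_iff_diff_eq_0)
qed

lemma mean_of_sphere_points_imp_eq:
  fixes a :: "nat \<Rightarrow> nat \<Rightarrow> 'a::linordered_idom"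
  assumes norms: "\<And>i. i \<le> K \<Longrightarrow> (\<Sum>j<n. (a i j)\<^sup>2) = R"
    and mean: "\<And>j. j < n \<Longrightarrow> (\<Sum>i<K. a i j) = of_nat K * a K j"
    and "i < K" and "j < n"
  shows "a i j = a K j"
proof -
  have "(\<Sum>i<K. \<Sum>j<n. (a i j - a K j)\<^sup>2)
      = (\<Sum>i<K. \<Sum>j<n. (a i j)\<^sup>2) - 2 * (\<Sum>j<n. (\<Sum>i<K. a i j) * a K j)
        + of_nat K * (\<Sum>j<n. (a K j)\<^sup>2)"
    by (simp add: power2_diff sum.distrib sum_subtractf sum_distrib_left sum_distrib_right
        sum.swap[of _ "{..<K}"] algebra_simps)
  also have "(\<Sum>j<n. (\<Sum>i<K. a i j) * a K j) = of_nat K * (\<Sum>j<n. (a K j)\<^sup>2)"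
    using mean by (simp add: sum_distrib_left power2_eq_square mult.assoc)
  also have "(\<Sum>i<K. \<Sum>j<n. (a i j)\<^sup>2) = of_nat K * (\<Sum>j<n. (a K j)\<^sup>2)"
    using norms by simp
  finally have "(\<Sum>i<K. \<Sum>j<n. (a i j - a K j)\<^sup>2) = 0" by simp
  then have "(\<Sum>j<n. (a i j - a K j)\<^sup>2) = 0"
    using \<open>i < K\<close> by (simp add: sum_nonneg_eq_0_iff sum_nonneg)
  then show ?thesis using \<open>j < n\<close> by (simp add: sum_nonneg_eq_0_iff)
qed

lemma finite_solutions: "finite B \<Longrightarrow> finite (solutions k B)"
  unfolding solutions_def by (simp add: finite_PiE)

lemma card_solutions_le:
  assumes "finite B" and "0 < K"
  shows "card (solutions (Suc K) B) \<le> card B ^ K"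
proof -
  define X where "X = {0..<Suc K} - {K - 1}"
  have "inj_on (\<lambda>x. restrict x X) (solutions (Suc K) B)"
  proof (rule inj_onI)
    fix x y assume x: "x \<in> solutions (Suc K) B" and y: "y \<in> solutions (Suc K) B"
      and "restrict x X = restrict y X"
    then have on_X: "x i = y i" if "i \<in> X" for i using that by (metis restrict_apply')
    have split: "(\<Sum>i<K. z i) = (\<Sum>i<K - 1. z i) + z (K - 1)" for z :: "nat \<Rightarrow> int"
      using \<open>0 < K\<close> by (metis Suc_pred' sum.lessThan_Suc)
    have "(\<Sum>i<K - 1. x i) = (\<Sum>i<K - 1. y i)" by (intro sum.cong) (auto simp: X_def intro!: on_X)
    moreover have "x K = y K" using \<open>0 < K\<close> by (intro on_X) (auto simp: X_def)
    ultimately have "x (K - 1) = y (K - 1)"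
      using x y split[of x] split[of y] by (simp add: solutions_def)
    then have "x i = y i" if "i \<in> {0..<Suc K}" for i
      using on_X that by (cases "i = K - 1") (auto simp: X_def)
    then show "x = y" using x y by (intro PiE_ext) (auto simp: solutions_def)
  qed
  moreover have "(\<lambda>x. restrict x X) ` solutions (Suc K) B \<subseteq> X \<rightarrow>\<^sub>E B"
  proof -
    have "X \<subseteq> {0..<Suc K}" by (auto simp: X_def)
    then show ?thesis by (auto simp: solutions_def restrict_PiE_iff)
  qed
  ultimately have "card (solutions (Suc K) B) \<le> card (X \<rightarrow>\<^sub>E B)"
    using \<open>finite B\<close> by (intro card_inj_on_le) (auto simp: X_def finite_PiE)
  also have "\<dots> = card B ^ K" using \<open>0 < K\<close> by (simp add: card_PiE X_def)
  finally show ?thesis .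
qed

definition sphere_points :: "nat \<Rightarrow> nat \<Rightarrow> nat \<Rightarrow> (nat \<Rightarrow> nat) set" where
  "sphere_points n d R = {v \<in> {0..<n} \<rightarrow>\<^sub>E {0..<d}. (\<Sum>j<n. (v j)\<^sup>2) = R}"

lemma sphere_points_subset: "d \<le> D \<Longrightarrow> sphere_points n d R \<subseteq> {0..<n} \<rightarrow>\<^sub>E {0..<D}"
  unfolding sphere_points_def using PiE_mono[of "{0..<n}" "\<lambda>_. {0..<d}" "\<lambda>_. {0..<D}"] by auto

lemma finite_sphere_points: "finite (sphere_points n d R)"
  by (rule finite_subset[OF sphere_points_subset[OF order_refl]]) (intro finite_PiE; simp)

lemma card_sphere_points_le: "card (sphere_points n d R) \<le> d ^ n"
  using card_mono[OF _ sphere_points_subset[OF order_refl]] by (simp add: finite_PiE card_PiE)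

lemma exists_large_sphere:
  assumes "0 < n" and "0 < d"
  shows "\<exists>R. d ^ n \<le> card (sphere_points n d R) * (n * d\<^sup>2)"
proof -
  define P where "P = {0..<n} \<rightarrow>\<^sub>E {0..<d}"
  define M where "M = n * (d - 1)\<^sup>2"
  define norm2 where "norm2 v = (\<Sum>j<n. (v j)\<^sup>2)" for v :: "nat \<Rightarrow> nat"
  have "norm2 v \<le> M" if "v \<in> P" for v
  proof -
    have "v j \<le> d - 1" if "j < n" for j
    proof -
      have "v j < d" using \<open>v \<in> P\<close> that by (auto simp: P_def PiE_iff)
      then show ?thesis by linarith
    qed
    then have "norm2 v \<le> of_nat (card {..<n}) * (d - 1)\<^sup>2"
      unfolding norm2_def by (intro sum_bounded_above power_mono) auto
    then show ?thesis by (simp add: M_def)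
  qed
  then obtain R where "card (norm2 -` {R} \<inter> P) * card {..M} \<ge> card P"
    using pigeonhole_card[of norm2 P "{..M}"] by (auto simp: P_def finite_PiE)
  moreover have "norm2 -` {R} \<inter> P = sphere_points n d R"
    by (auto simp: sphere_points_def norm2_def P_def)
  moreover have "card {..M} \<le> n * d\<^sup>2"
  proof -
    have "(d - 1)\<^sup>2 + 1 \<le> d\<^sup>2" using \<open>0 < d\<close> by (cases d) (auto simp: power2_eq_square)
    then have "n * ((d - 1)\<^sup>2 + 1) \<le> n * d\<^sup>2" by (rule mult_le_mono2)
    then show ?thesis using \<open>0 < n\<close> by (simp add: M_def algebra_simps)
  qed
  ultimately have "card P \<le> card (sphere_points n d R) * (n * d\<^sup>2)"
    by (metis le_trans mult_le_mono2)
  then show ?thesis by (auto simp: P_def card_PiE)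
qed

definition behrend_block :: "nat \<Rightarrow> nat \<Rightarrow> nat \<Rightarrow> nat \<Rightarrow> (nat \<Rightarrow> nat) \<Rightarrow> int set" where
  "behrend_block K L n d v =
     {int (K * L) * from_digits (K * d) n v <.. int (K * L) * from_digits (K * d) n v + int L}"

definition behrend_set :: "nat \<Rightarrow> nat \<Rightarrow> nat \<Rightarrow> nat \<Rightarrow> nat \<Rightarrow> int set" where
  "behrend_set K L n d R = (\<Union>v\<in>sphere_points n d R. behrend_block K L n d v)"

lemma finite_behrend_block: "finite (behrend_block K L n d v)"
  by (simp add: behrend_block_def)

lemma card_behrend_block: "card (behrend_block K L n d v) = L"
  by (simp add: behrend_block_def)

lemma behrend_set_subset:
  assumes "0 < K"
  shows "behrend_set K L n d R \<subseteq> {1..int (K * L * (K * d) ^ n)}"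
proof
  fix z assume "z \<in> behrend_set K L n d R"
  then obtain v where v: "v \<in> sphere_points n d R" and z: "z \<in> behrend_block K L n d v"
    by (auto simp: behrend_set_def)
  define M where "M = int (K * L)"
  define b where "b = from_digits (K * d) n v"
  have z_bounds: "M * b < z" "z \<le> M * b + int L"
    using z by (simp_all add: behrend_block_def M_def b_def)
  have "v \<in> {0..<n} \<rightarrow>\<^sub>E {0..<K * d}" using sphere_points_subset[of d "K * d"] v \<open>0 < K\<close> by auto
  then have "v j < K * d" if "j < n" for j using that by (auto simp: PiE_iff)
  then have "0 \<le> b" "b + 1 \<le> int (K * d) ^ n"
    using from_digits_bounds[of n v "K * d"] by (simp_all add: b_def)
  then have "0 \<le> M * b" "M * b + M \<le> M * int (K * d) ^ n"
    using mult_left_mono[of "b + 1" "int (K * d) ^ n" M] by (simp_all add: M_def distrib_left)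
  moreover have "int L \<le> M" unfolding M_def using \<open>0 < K\<close> by (simp only: of_nat_le_iff) simp
  ultimately have "1 \<le> z" "z \<le> M * int (K * d) ^ n" using z_bounds by linarith+
  then show "z \<in> {1..int (K * L * (K * d) ^ n)}" by (simp add: M_def)
qed

lemma card_behrend_set:
  assumes "0 < K"
  shows "card (behrend_set K L n d R) = card (sphere_points n d R) * L"
proof -
  define M where "M = int (K * L)"
  have "behrend_block K L n d v \<inter> behrend_block K L n d w = {}"
    if "v \<in> sphere_points n d R" "w \<in> sphere_points n d R" "v \<noteq> w" for v w
  proof (rule ccontr)
    define b where "b u = from_digits (K * d) n u" for u
    assume "behrend_block K L n d v \<inter> behrend_block K L n d w \<noteq> {}"
    then obtain z where "z \<in> behrend_block K L n d v" "z \<in> behrend_block K L n d w" by blast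
    then have "M * b v < z" "z \<le> M * b v + int L" "M * b w < z" "z \<le> M * b w + int L"
      by (simp_all add: behrend_block_def M_def b_def)
    moreover have "int L \<le> M" unfolding M_def using \<open>0 < K\<close> by (simp only: of_nat_le_iff) simp
    ultimately have "\<bar>M * (b v - b w)\<bar> < M"
      unfolding right_diff_distrib abs_less_iff by linarith
    then have "b v = b w" using abs_mult_less_imp_zero by fastforce
    moreover have "inj_on b (sphere_points n d R)"
      unfolding b_def using \<open>0 < K\<close>
      by (intro inj_on_subset[OF inj_on_from_digits] sphere_points_subset) simp
    ultimately show False using that by (meson inj_onD)
  qed
  then show ?thesis
    unfolding behrend_set_def
    by (subst card_UN_disjoint) (auto simp: finite_sphere_points finite_behrend_block card_behrend_block)
qed

lemma solution_in_behrend_block: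
  assumes "0 < K" and x: "x \<in> solutions (Suc K) (behrend_set K L n d R)"
  shows "\<exists>v\<in>sphere_points n d R. x \<in> solutions (Suc K) (behrend_block K L n d v)"
proof -
  define M where "M = int (K * L)"
  define b where "b v = from_digits (K * d) n v" for v
  have "\<forall>i\<in>{..K}. \<exists>v\<in>sphere_points n d R. x i \<in> behrend_block K L n d v"
    using x by (auto simp: solutions_def behrend_set_def PiE_iff)
  then obtain V where V: "\<And>i. i \<le> K \<Longrightarrow> V i \<in> sphere_points n d R \<and> x i \<in> behrend_block K L n d (V i)"
    by (metis atMost_iff)
  have eq: "(\<Sum>i<K. x i) = int K * x K" using x by (simp add: solutions_def)
  define r where "r i = x i - M * b (V i)" for i
  have sum_eq: "(\<Sum>i<K. M * b (V i) + r i) = int K * (M * b (V K) + r K)"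
    using eq by (simp add: r_def)
  have offsets: "1 \<le> r i \<and> r i \<le> int L" if "i \<le> K" for i
    using V[OF that] by (auto simp: r_def behrend_block_def M_def b_def)
  have "int K * int L \<le> M" by (simp add: M_def)
  then have "(\<Sum>i<K. b (V i)) = int K * b (V K)"
    by (rule block_offsets_cancel[OF \<open>0 < K\<close> _ offsets sum_eq])
  moreover have "V i j < d" if "i \<le> K" "j < n" for i j
    using V[OF that(1)] that(2) by (auto simp: sphere_points_def PiE_iff)
  ultimately have "(\<Sum>i<K. int (V i j)) = int K * int (V K j)" if "j < n" for j
    using \<open>0 < K\<close> that by (intro from_digits_no_carry[of K d "K * d"]) (auto simp: b_def)
  moreover have "(\<Sum>j<n. (int (V i j))\<^sup>2) = int R" if "i \<le> K" for i
    using V[OF that] by (auto simp: sphere_points_def simp flip: of_nat_power of_nat_sum)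
  ultimately have coordinates_eq: "int (V i j) = int (V K j)" if "i < K" "j < n" for i j
    using that by (intro mean_of_sphere_points_imp_eq[where a = "\<lambda>i j. int (V i j)"]) auto
  have "V i = V K" if "i < K" for i
  proof -
    have "V i \<in> {0..<n} \<rightarrow>\<^sub>E {0..<d}" "V K \<in> {0..<n} \<rightarrow>\<^sub>E {0..<d}"
      using V[of i] V[of K] that by (auto simp: sphere_points_def)
    then show ?thesis by (rule PiE_ext) (use coordinates_eq that in auto)
  qed
  then have "x i \<in> behrend_block K L n d (V K)" if "i \<le> K" for i
    using V[OF that] that by (cases "i = K") auto
  then have "x \<in> solutions (Suc K) (behrend_block K L n d (V K))"
    using x by (auto simp: solutions_def PiE_iff less_Suc_eq_le)
  then show ?thesis using V[of K] by blast
qed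

lemma num_solutions_behrend_set_le:
  assumes "0 < K"
  shows "num_solutions (Suc K) (behrend_set K L n d R) \<le> card (sphere_points n d R) * L ^ K"
proof -
  have "num_solutions (Suc K) (behrend_set K L n d R)
      \<le> card (\<Union>v\<in>sphere_points n d R. solutions (Suc K) (behrend_block K L n d v))"
    unfolding num_solutions_def using solution_in_behrend_block[OF \<open>0 < K\<close>]
    by (intro card_mono finite_UN_I finite_sphere_points)
      (auto simp: finite_solutions finite_behrend_block)
  also have "\<dots> \<le> (\<Sum>v\<in>sphere_points n d R. card (solutions (Suc K) (behrend_block K L n d v)))"
    by (rule card_UN_le) (rule finite_sphere_points)
  also have "\<dots> \<le> (\<Sum>v\<in>sphere_points n d R. L ^ K)"
    using card_solutions_le[OF finite_behrend_block \<open>0 < K\<close>]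
    by (intro sum_mono) (simp add: card_behrend_block)
  finally show ?thesis by simp
qed

lemma behrend_set_exists:
  assumes "2 \<le> K" and "0 < n" and "0 < d" and N: "N = K * L * (K * d) ^ n"
  shows "\<exists>A \<subseteq> {1..int N}. N \<le> K ^ Suc n * (n * d\<^sup>2) * card A
           \<and> num_solutions (Suc K) A * d ^ n \<le> N ^ K"
proof -
  obtain R where R: "d ^ n \<le> card (sphere_points n d R) * (n * d\<^sup>2)"
    using exists_large_sphere \<open>0 < n\<close> \<open>0 < d\<close> by blast
  define A where "A = behrend_set K L n d R"
  have "0 < K" using \<open>2 \<le> K\<close> by simp
  have N_eq: "N = K ^ Suc n * (L * d ^ n)" using N by (simp add: power_mult_distrib mult_ac)
  have "A \<subseteq> {1..int N}" using behrend_set_subset[OF \<open>0 < K\<close>] by (simp add: A_def N)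
  moreover have "N \<le> K ^ Suc n * (n * d\<^sup>2) * card A"
  proof -
    have "L * d ^ n \<le> L * (card (sphere_points n d R) * (n * d\<^sup>2))" using R by simp
    then show ?thesis
      by (simp add: N_eq A_def card_behrend_set[OF \<open>0 < K\<close>] mult_ac)
  qed
  moreover have "num_solutions (Suc K) A * d ^ n \<le> N ^ K"
  proof -
    have "num_solutions (Suc K) A * d ^ n \<le> card (sphere_points n d R) * L ^ K * d ^ n"
      using num_solutions_behrend_set_le[OF \<open>0 < K\<close>] by (simp add: A_def)
    also have "\<dots> \<le> (d ^ n) ^ 2 * L ^ K"
      using card_sphere_points_le by (simp add: power2_eq_square mult_ac)
    also have "\<dots> \<le> (d ^ n) ^ K * L ^ K"
      using \<open>0 < d\<close> \<open>2 \<le> K\<close> by (intro mult_right_mono power_increasing) auto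
    also have "\<dots> = (L * d ^ n) ^ K" by (simp add: power_mult_distrib)
    also have "\<dots> \<le> N ^ K" by (intro power_mono) (use \<open>0 < K\<close> in \<open>simp_all add: N_eq\<close>)
    finally show ?thesis .
  qed
  ultimately show ?thesis by blast
qed

lemma behrend_density_le:
  fixes K n d :: nat and y :: real
  assumes "3 \<le> K" and "real K \<le> y" and "real K ^ n \<le> y\<^sup>2" and "real n \<le> y\<^sup>2" and "real d \<le> y\<^sup>2"
  shows "2 * real (K ^ Suc n * (n * d\<^sup>2)) \<le> y ^ 16"
proof -
  have "real K \<le> real K ^ 7" by (rule self_le_power) (use \<open>3 \<le> K\<close> in auto)
  then have "2 \<le> real K ^ 7" using \<open>3 \<le> K\<close> by linarith
  then have "2 * real K \<le> real K ^ 7 * real K" by (simp add: mult_right_mono)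
  also have "\<dots> \<le> y ^ 8" using \<open>real K \<le> y\<close> power_mono[of "real K" y 8] by (simp flip: power_Suc2)
  finally have "2 * real K \<le> y ^ 8" .
  moreover have "real d ^ 2 \<le> y ^ 4" using assms(5) power_mono[of d "y\<^sup>2" 2] by simp
  ultimately have "2 * real K * (real K ^ n * (real n * real d ^ 2)) \<le> y ^ 8 * (y\<^sup>2 * (y\<^sup>2 * y ^ 4))"
    using assms(3,4) by (intro mult_mono) auto
  then show ?thesis by (simp add: mult.assoc flip: power_add)
qed

lemma one_le_ln:
  fixes t :: real
  assumes "3 \<le> t"
  shows "1 \<le> ln t"
  using exp_le assms by (simp add: ln_ge_iff)

lemma nat_floor_square_bounds:
  fixes y :: real
  assumes "2 \<le> y"
  shows "y \<le> nat \<lfloor>y\<^sup>2\<rfloor>" and "nat \<lfloor>y\<^sup>2\<rfloor> \<le> y\<^sup>2"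
proof -
  have "2 * y \<le> y\<^sup>2" using mult_right_mono[of 2 y y] assms by (simp add: power2_eq_square)
  then show "y \<le> nat \<lfloor>y\<^sup>2\<rfloor>" and "nat \<lfloor>y\<^sup>2\<rfloor> \<le> y\<^sup>2" using assms by linarith+
qed

lemma behrend_parameters:
  fixes K :: nat and x :: real
  assumes "3 \<le> K" and x: "16 * ln K \<le> x"
  obtains n d :: nat where "0 < n" and "0 < d"
    and "2 * exp (- x) * real (K ^ Suc n * (n * d\<^sup>2)) \<le> 1"
    and "exp (x\<^sup>2 / (256 * ln K)) \<le> real d ^ n"
proof
  \<comment> \<open>With \<open>y = e^(x/16)\<close> one gets \<open>K \<le> y\<close>, \<open>K^n, n \<le> y^2\<close> and \<open>y \<le> d \<le> y^2\<close>; hence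
      \<open>2 K^(n+1) n d^2 \<le> y^16 = e^x\<close> and \<open>d^n \<ge> y^n \<ge> e^(x^2/(256 ln K))\<close>.\<close>
  have lnK: "1 \<le> ln K" using \<open>3 \<le> K\<close> by (simp add: one_le_ln)
  define q where "q = x / (8 * ln K)"
  define y where "y = exp (x / 16)"
  define n where "n = nat \<lfloor>q\<rfloor>"
  define d where "d = nat \<lfloor>y\<^sup>2\<rfloor>"
  have y_pow: "y ^ m = exp (m * x / 16)" for m :: nat
    by (simp add: y_def flip: exp_of_nat_mult)
  have "2 \<le> q" using x lnK by (simp add: q_def field_simps)
  then have n: "q / 2 \<le> n" "n \<le> q" by (simp_all add: n_def) linarith+
  then show "0 < n" using \<open>2 \<le> q\<close> by linarith
  have "real K = exp (ln K)" using \<open>3 \<le> K\<close> by simp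
  also have "\<dots> \<le> y" using x by (simp add: y_def)
  finally have K_le_y: "real K \<le> y" .
  then have "2 \<le> y" using \<open>3 \<le> K\<close> by linarith
  then have d: "y \<le> d" "d \<le> y\<^sup>2" unfolding d_def by (rule nat_floor_square_bounds)+
  then show "0 < d" using \<open>2 \<le> y\<close> by linarith
  have Kn_le_y: "real K ^ n \<le> y\<^sup>2"
  proof -
    have "real K ^ n = exp (n * ln K)" using \<open>3 \<le> K\<close> by (simp add: exp_of_nat_mult)
    also have "\<dots> \<le> exp (q * ln K)" using n lnK by (intro exp_mono mult_right_mono) auto
    also have "\<dots> = y\<^sup>2" using lnK by (simp add: q_def y_pow)
    finally show ?thesis .
  qed
  have n_le_y: "real n \<le> y\<^sup>2"
  proof -
    have "q \<le> x / 8" using lnK x by (simp add: q_def field_simps)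
    also have "\<dots> \<le> exp (x / 8)" using exp_ge_add_one_self[of "x / 8"] by linarith
    finally show ?thesis using n y_pow[of 2] by simp
  qed
  have "2 * real (K ^ Suc n * (n * d\<^sup>2)) \<le> y ^ 16"
    by (rule behrend_density_le[OF \<open>3 \<le> K\<close> K_le_y Kn_le_y n_le_y d(2)])
  then have "2 * real (K ^ Suc n * (n * d\<^sup>2)) \<le> exp x" by (simp add: y_pow)
  then show "2 * exp (- x) * real (K ^ Suc n * (n * d\<^sup>2)) \<le> 1"
    by (simp add: exp_minus field_simps)
  have "exp (x\<^sup>2 / (256 * ln K)) = exp (q / 2 * x / 16)"
    by (simp add: q_def power2_eq_square field_simps)
  also have "\<dots> \<le> y ^ n" using n x lnK by (simp add: y_pow mult_right_mono)
  also have "\<dots> \<le> real d ^ n" using d \<open>2 \<le> y\<close> by (simp add: power_mono)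
  finally show "exp (x\<^sup>2 / (256 * ln K)) \<le> real d ^ n" .
qed

lemma arbitrarily_large_behrend_sets:
  fixes \<alpha> :: real
  assumes "3 \<le> K" and "0 < \<alpha>" and "16 * ln K \<le> ln (2 / \<alpha>)"
  shows "\<exists>N\<ge>m. 1 \<le> N \<and> (\<exists>A \<subseteq> {1..int N}. \<alpha> * real N \<le> real (card A) \<and>
           real (num_solutions (Suc K) A)
             \<le> exp (- (1 / (256 * ln K)) * (ln (2 / \<alpha>))\<^sup>2) * real N ^ K)"
proof -
  define x where "x = ln (2 / \<alpha>)"
  have \<alpha>: "\<alpha> = 2 * exp (- x)" using \<open>0 < \<alpha>\<close> by (simp add: x_def exp_minus)
  obtain n d where "0 < n" "0 < d" and density: "2 * exp (- x) * real (K ^ Suc n * (n * d\<^sup>2)) \<le> 1"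
    and decay: "exp (x\<^sup>2 / (256 * ln K)) \<le> real d ^ n"
    by (rule behrend_parameters[OF \<open>3 \<le> K\<close> assms(3)[folded x_def]])
  define N where "N = K * Suc m * (K * d) ^ n"
  have "2 \<le> K" using \<open>3 \<le> K\<close> by simp
  from behrend_set_exists[OF this \<open>0 < n\<close> \<open>0 < d\<close> N_def]
  obtain A where A: "A \<subseteq> {1..int N}" and card_A: "N \<le> K ^ Suc n * (n * d\<^sup>2) * card A"
    and sols: "num_solutions (Suc K) A * d ^ n \<le> N ^ K"
    by blast
  have "Suc m * 1 \<le> Suc m * (K * (K * d) ^ n)"
    using \<open>3 \<le> K\<close> \<open>0 < d\<close> by (intro mult_le_mono2) simp
  also have "\<dots> = N" by (simp add: N_def algebra_simps)
  finally have "Suc m \<le> N" by simp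
  moreover have "\<alpha> * real N \<le> real (card A)"
  proof -
    have "\<alpha> * real N \<le> \<alpha> * (real (K ^ Suc n * (n * d\<^sup>2)) * real (card A))"
      using card_A \<open>0 < \<alpha>\<close> by (intro mult_left_mono) (simp_all flip: of_nat_mult)
    also have "\<dots> = \<alpha> * real (K ^ Suc n * (n * d\<^sup>2)) * real (card A)"
      by (simp only: mult.assoc)
    also have "\<dots> \<le> 1 * real (card A)"
      using density by (intro mult_right_mono) (simp_all add: \<alpha>)
    finally show ?thesis by simp
  qed
  moreover have "real (num_solutions (Suc K) A) \<le> exp (- (x\<^sup>2 / (256 * ln K))) * real N ^ K"
  proof -
    have "exp (x\<^sup>2 / (256 * ln K)) * real (num_solutions (Suc K) A)
        \<le> real d ^ n * real (num_solutions (Suc K) A)"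
      using decay by (rule mult_right_mono) simp
    also have "\<dots> \<le> real N ^ K"
      using sols by (metis of_nat_le_iff of_nat_mult of_nat_power mult.commute)
    finally show ?thesis by (simp add: exp_minus field_simps)
  qed
  ultimately show ?thesis
    using A unfolding x_def by (intro exI[of _ N]) (auto intro!: exI[of _ A])
qed

theorem theorem4:
  fixes k :: nat
  assumes "k \<ge> 4"
  shows "\<exists>c>0. \<exists>\<alpha>0>0. \<forall>\<alpha>::real. 0 < \<alpha> \<and> \<alpha> < \<alpha>0 \<longrightarrow>
           infinite {N::nat. N \<ge> 1 \<and> (\<exists>A \<subseteq> {1..int N}.
              real (card A) \<ge> \<alpha> * real N \<and>
              real (num_solutions k A) \<le> exp (- c * (ln (2 / \<alpha>))\<^sup>2) * real N ^ (k - 1))}"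
proof -
  obtain K where k: "k = Suc K" and "3 \<le> K"
    using assms by (intro that[of "k - 1"]) auto
  have infinitely_many_N: "infinite {N::nat. N \<ge> 1 \<and> (\<exists>A \<subseteq> {1..int N}. real (card A) \<ge> \<alpha> * real N \<and>
          real (num_solutions k A) \<le> exp (- (1 / (256 * ln K)) * (ln (2 / \<alpha>))\<^sup>2) * real N ^ (k - 1))}"
    if "0 < \<alpha> \<and> \<alpha> < 2 * exp (- 16 * ln K)" for \<alpha> :: real
  proof -
    have "exp (16 * ln K) \<le> 2 / \<alpha>" using that by (simp add: exp_minus field_simps)
    then have "16 * ln K \<le> ln (2 / \<alpha>)" using that by (simp add: ln_ge_iff)
    then show ?thesis
      unfolding infinite_nat_iff_unbounded_le k using arbitrarily_large_behrend_sets \<open>3 \<le> K\<close> that by simp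
  qed
  show ?thesis
  proof (intro exI conjI allI impI)
    show "0 < 1 / (256 * ln (real K))" using \<open>3 \<le> K\<close> by simp
    show "0 < 2 * exp (- 16 * ln (real K))" by simp
  qed (rule infinitely_many_N)
qed

end
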